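(* Let $\nu\ge0$, $K>\nu+1$, and let $r>0$ satisfy $r=\Psi_\nu(2Kr)$, where $\Psi_\nu(x)=I_{\nu+1}(x)/I_\nu(x)$. Then $$r<\sqrt{1-\frac{1}{2K}}.$$
   Context: $I_\nu$ denotes the modified Bessel function of the first kind of order $\nu$. *)

theory Defs
  imports "HOL-Analysis.Analysis"
begin

text \<open>We use it for x > 0 (where powr is the usual real power).\<close>
definition bessel_I :: "real \<Rightarrow> real \<Rightarrow> real" where
  "bessel_I nu x = (\<Sum>m. (x / 2) powr (2 * real m + nu) / (fact m * Gamma (real m + nu + 1)))"

definition Psi :: "real \<Rightarrow> real \<Rightarrow> real" where
  "Psi nu x = bessel_I (nu + 1) x / bessel_I nu x"

end

theory Submission
  imports Defs
begin

text \<open>Write \<open>I\<^sub>\<nu>(2t) = t\<^sup>\<nu> A(t\<^sup>2)\<close> and \<open>I\<^sub>\<nu>\<^sub>+\<^sub>1(2t) = t\<^sup>\<nu>\<^sup>+\<^sup>1 B(t\<^sup>2)\<close> with power series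
  \<open>A, B\<close> of positive coefficients. With \<open>t = K r\<close>, the fixed-point equation reads \<open>r A = t B\<close>, and
  the claim \<open>r\<^sup>2 < 1 - 1/(2K)\<close> becomes \<open>A\<^sup>2 - A B/2 - s B\<^sup>2 > 0\<close> at \<open>s = t\<^sup>2\<close>.
  This holds for every \<open>s > 0\<close>: comparing Cauchy products coefficientwise, the coefficient
  of \<open>s\<^sup>m\<close> on the left minus that on the right is a convolution
  \<open>\<Sum>\<^sub>i b\<^sub>i b\<^sub>m\<^sub>-\<^sub>i W(i, m-i)\<close> of the coefficients \<open>b\<close> of \<open>B\<close>. Its kernel \<open>W\<close> is not pointwise
  nonnegative, but after symmetrising and adding a multiple of a convolution that vanishes
  by the two-term recursion of \<open>b\<close>, it becomes a nonnegative constant.\<close>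

definition bessel_coeff :: "real \<Rightarrow> nat \<Rightarrow> real" where
  "bessel_coeff nu k = 1 / (fact k * Gamma (real k + nu + 1))"

lemma bessel_coeff_pos: "nu > -1 \<Longrightarrow> bessel_coeff nu k > 0"
  unfolding bessel_coeff_def by (intro divide_pos_pos mult_pos_pos Gamma_real_pos) auto

lemma Gamma_plus1_pos: "(z::real) > 0 \<Longrightarrow> Gamma (z + 1) = z * Gamma z"
  by (rule Gamma_plus1) (auto simp: nonpos_Ints_def)

lemma bessel_coeff_order_Suc:
  assumes "nu > -1"
  shows "bessel_coeff nu k = (real k + nu + 1) * bessel_coeff (nu + 1) k"
proof -
  have "Gamma (real k + (nu + 1) + 1) = (real k + nu + 1) * Gamma (real k + nu + 1)"
    using Gamma_plus1_pos[of "real k + nu + 1"] assms by (simp add: add.assoc)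
  moreover have "Gamma (real k + nu + 1) > 0" "real k + nu + 1 > 0"
    using assms by (auto intro: Gamma_real_pos)
  ultimately show ?thesis
    unfolding bessel_coeff_def by (simp add: divide_simps)
qed

lemma bessel_coeff_Suc:
  assumes "nu > -1"
  shows "bessel_coeff nu k = (real k + 1) * (real k + 1 + nu) * bessel_coeff nu (Suc k)"
proof -
  define G where "G = Gamma (real k + nu + 1)"
  have "Gamma (real (Suc k) + nu + 1) = (real k + 1 + nu) * G"
    using Gamma_plus1_pos[of "real k + nu + 1"] assms unfolding G_def by (simp add: algebra_simps)
  then have Suc_k: "bessel_coeff nu (Suc k) = 1 / ((real k + 1) * fact k * ((real k + 1 + nu) * G))"
    unfolding bessel_coeff_def by simp
  have k: "bessel_coeff nu k = 1 / (fact k * G)"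
    unfolding bessel_coeff_def G_def ..
  have "G > 0" "real k + 1 + nu > 0"
    using assms by (auto simp: G_def intro: Gamma_real_pos)
  then show ?thesis
    unfolding Suc_k k by (simp add: divide_simps)
qed

lemma convolution_reflect:
  fixes b :: "nat \<Rightarrow> 'a::comm_semiring_1" and f :: "nat \<Rightarrow> nat \<Rightarrow> 'a"
  shows "(\<Sum>i\<le>m. b i * b (m - i) * f i (m - i)) = (\<Sum>i\<le>m. b i * b (m - i) * f (m - i) i)"
  by (rule sum.reindex_bij_witness[where i="\<lambda>i. m - i" and j="\<lambda>i. m - i"])
     (auto simp: mult.commute)

lemma convolution_shift_identity:
  fixes b :: "nat \<Rightarrow> real" and mu :: real
  assumes rec: "\<And>k. b k = (real k + 1) * (real k + 1 + mu) * b (Suc k)"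
  shows "(\<Sum>i\<le>m. b i * b (m - i) * ((real i)\<^sup>2 * (real i + mu)))
       = (\<Sum>i\<le>m. b i * b (m - i) * (real (m - i) * (real (m - i) + mu) * (real i + 1)))"
proof (cases m)
  case (Suc n)
  have "(\<Sum>i\<le>m. b i * b (m - i) * ((real i)\<^sup>2 * (real i + mu)))
      = (\<Sum>i\<le>n. b (Suc i) * b (n - i) * ((real (Suc i))\<^sup>2 * (real (Suc i) + mu)))"
    unfolding Suc by (subst sum.atMost_Suc_shift) simp
  also have "\<dots> = (\<Sum>i\<le>n. b i * b (m - i) * (real (m - i) * (real (m - i) + mu) * (real i + 1)))"
  proof (rule sum.cong[OF refl])
    fix i assume "i \<in> {..n}"
    then have "m - i = Suc (n - i)" "real (Suc (n - i)) = real (n - i) + 1"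
      using Suc by auto
    then show "b (Suc i) * b (n - i) * ((real (Suc i))\<^sup>2 * (real (Suc i) + mu))
        = b i * b (m - i) * (real (m - i) * (real (m - i) + mu) * (real i + 1))"
      by (simp only: rec[of i] rec[of "n - i"]) (simp add: power2_eq_square algebra_simps)
  qed
  also have "\<dots> = (\<Sum>i\<le>m. b i * b (m - i) * (real (m - i) * (real (m - i) + mu) * (real i + 1)))"
    unfolding Suc by simp
  finally show ?thesis .
qed simp

lemma convolution_kernel_nonneg:
  fixes b :: "nat \<Rightarrow> real" and mu :: real
  assumes mu: "mu \<ge> 1" and pos: "\<And>k. b k > 0"
    and rec: "\<And>k. b k = (real k + 1) * (real k + 1 + mu) * b (Suc k)"
  defines "W \<equiv> \<lambda>x y. (x + mu) * (y + mu) - (x + mu) / 2 - y * (y + mu)"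
  shows "(\<Sum>i\<le>m. b i * b (m - i) * W (real i) (real (m - i))) \<ge> 0"
proof -
  define Z where "Z = (\<lambda>x y. x\<^sup>2 * (x + mu) - y * (y + mu) * (x + 1 :: real))"
  define M where "M = real m"
  define \<kappa> where "\<kappa> = (M + 2*mu) * ((2*M + 2*mu - 1) * (mu - 1/2) - M)"
  define u where "u = (\<lambda>i. b i * b (m - i))"
  have Z_sum: "(\<Sum>i\<le>m. u i * Z (real i) (real (m - i))) = 0"
    using convolution_shift_identity[OF rec, of m]
    by (simp add: u_def Z_def right_diff_distrib sum_subtractf mult.assoc)
  have symmetrised: "(2*M + 2*mu - 1) * (W x y + W y x) + 2 * (Z x y + Z y x) = \<kappa>"
    if "x + y = M" for x y
    unfolding W_def Z_def \<kappa>_def that[symmetric] by (simp add: power2_eq_square field_simps)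
  let ?S = "\<lambda>F. \<Sum>i\<le>m. u i * F (real i) (real (m - i))"
  let ?S' = "\<lambda>F. \<Sum>i\<le>m. u i * F (real (m - i)) (real i)"
  have W_reflect: "?S W = ?S' W" and Z_reflect: "?S' Z = 0"
    using Z_sum convolution_reflect[of b m "\<lambda>i j. W (real i) (real j)"]
      convolution_reflect[of b m "\<lambda>i j. Z (real i) (real j)"]
    by (simp_all add: u_def)
  have "(2*M + 2*mu - 1) * (2 * ?S W)
      = (2*M + 2*mu - 1) * (?S W + ?S' W) + 2 * (?S Z + ?S' Z)"
    unfolding W_reflect Z_reflect Z_sum by (simp add: algebra_simps)
  also have "\<dots> = (\<Sum>i\<le>m. u i * ((2*M + 2*mu - 1) * (W (real i) (real (m - i)) + W (real (m - i)) (real i))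
                   + 2 * (Z (real i) (real (m - i)) + Z (real (m - i)) (real i))))"
    by (simp only: distrib_left sum.distrib sum_distrib_left mult.left_commute)
  also have "\<dots> = (\<Sum>i\<le>m. u i * \<kappa>)"
  proof (intro sum.cong refl)
    fix i assume "i \<in> {..m}"
    then have "real i + real (m - i) = M"
      by (simp add: M_def)
    then show "u i * ((2*M + 2*mu - 1) * (W (real i) (real (m - i)) + W (real (m - i)) (real i))
                   + 2 * (Z (real i) (real (m - i)) + Z (real (m - i)) (real i))) = u i * \<kappa>"
      by (simp only: symmetrised)
  qed
  also have "\<dots> \<ge> 0"
  proof -
    have "(2*M + 2*mu - 1) * (mu - 1/2) \<ge> (2*M + 1) * (1/2)"
      using mu by (intro mult_mono) (auto simp: M_def)
    then have "\<kappa> \<ge> 0"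
      using mu unfolding \<kappa>_def M_def by simp
    then show ?thesis
      unfolding u_def by (intro sum_nonneg mult_nonneg_nonneg less_imp_le[OF pos])
  qed
  finally show ?thesis
    using mu by (simp add: u_def zero_le_mult_iff M_def)
qed

lemma bessel_coeff_convolution_le:
  fixes nu :: real
  assumes nu: "nu \<ge> 0"
  shows "(\<Sum>i\<le>k. bessel_coeff (nu + 1) i * bessel_coeff (nu + 1) (k - i))
     \<le> (\<Sum>i\<le>Suc k. bessel_coeff nu i
                    * (bessel_coeff nu (Suc k - i) - bessel_coeff (nu + 1) (Suc k - i) / 2))"
proof -
  define b where "b = bessel_coeff (nu + 1)"
  define mu where "mu = nu + 1"
  define m where "m = Suc k"
  have rec: "\<And>k. b k = (real k + 1) * (real k + 1 + mu) * b (Suc k)"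
    unfolding b_def mu_def by (rule bessel_coeff_Suc) (use nu in simp)
  have order: "bessel_coeff nu j = (real j + mu) * b j" for j
    using bessel_coeff_order_Suc[of nu j] nu by (simp add: b_def mu_def add.assoc)
  have rhs: "(\<Sum>i\<le>m. bessel_coeff nu i * (bessel_coeff nu (m - i) - b (m - i) / 2))
      = (\<Sum>i\<le>m. b i * b (m - i) * ((real i + mu) * (real (m - i) + mu) - (real i + mu) / 2))"
    unfolding order by (intro sum.cong refl) (simp add: algebra_simps)
  have lhs: "(\<Sum>i\<le>k. b i * b (k - i))
      = (\<Sum>i\<le>m. b i * b (m - i) * (real (m - i) * (real (m - i) + mu)))"
  proof -
    have "(\<Sum>i\<le>k. b i * b (k - i)) = (\<Sum>i\<le>k. b i * b (m - i) * (real (m - i) * (real (m - i) + mu)))"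
    proof (intro sum.cong refl)
      fix i assume "i \<in> {..k}"
      then have "m - i = Suc (k - i)" "real (Suc (k - i)) = real (k - i) + 1"
        unfolding m_def by auto
      then show "b i * b (k - i) = b i * b (m - i) * (real (m - i) * (real (m - i) + mu))"
        by (simp only: rec[of "k - i"]) (simp add: algebra_simps)
    qed
    then show ?thesis
      unfolding m_def by simp
  qed
  have "0 \<le> (\<Sum>i\<le>m. b i * b (m - i) * ((real i + mu) * (real (m - i) + mu) - (real i + mu) / 2
                                              - real (m - i) * (real (m - i) + mu)))"
    using convolution_kernel_nonneg[OF _ _ rec, of m] nu bessel_coeff_pos[of "nu + 1"]
    by (simp add: b_def mu_def)
  also have "\<dots> = (\<Sum>i\<le>m. bessel_coeff nu i * (bessel_coeff nu (m - i) - b (m - i) / 2))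
                  - (\<Sum>i\<le>k. b i * b (k - i))"
    unfolding rhs lhs by (simp add: sum_subtractf[symmetric] right_diff_distrib)
  finally show ?thesis
    by (simp add: b_def m_def)
qed

lemma summable_norm_bessel_coeff:
  fixes nu s :: real
  assumes nu: "nu > -1"
  shows "summable (\<lambda>k. norm (bessel_coeff nu k * s ^ k))"
proof (rule summable_ratio_test[where c="1/2" and N="nat \<lceil>2 * \<bar>s\<bar>\<rceil>"])
  fix n assume "nat \<lceil>2 * \<bar>s\<bar>\<rceil> \<le> n"
  then have "2 * \<bar>s\<bar> \<le> real n"
    by linarith
  also have "real n \<le> (real n + 1) * (real n + 1 + nu)"
    using nu mult_mono[of 1 "real n + 1" "real n" "real n + 1 + nu"] by simp
  finally have s_le: "\<bar>s\<bar> \<le> (real n + 1) * (real n + 1 + nu) / 2"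
    by simp
  have "norm (norm (bessel_coeff nu (Suc n) * s ^ Suc n))
      = \<bar>s\<bar> * (bessel_coeff nu (Suc n) * \<bar>s\<bar> ^ n)"
    using bessel_coeff_pos[OF nu] by (simp add: abs_mult power_abs abs_of_pos)
  also have "\<dots> \<le> (real n + 1) * (real n + 1 + nu) / 2 * (bessel_coeff nu (Suc n) * \<bar>s\<bar> ^ n)"
    using s_le bessel_coeff_pos[OF nu] by (intro mult_right_mono) (auto simp: less_imp_le)
  also have "\<dots> = 1/2 * (bessel_coeff nu n * \<bar>s\<bar> ^ n)"
    by (simp add: bessel_coeff_Suc[OF nu, of n])
  also have "\<dots> = 1/2 * norm (norm (bessel_coeff nu n * s ^ n))"
    using bessel_coeff_pos[OF nu] by (simp add: abs_mult power_abs abs_of_pos)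
  finally show "norm (norm (bessel_coeff nu (Suc n) * s ^ Suc n))
      \<le> 1/2 * norm (norm (bessel_coeff nu n * s ^ n))" .
qed simp

lemma bessel_I_power_series:
  fixes nu t :: real
  assumes nu: "nu > -1" and t: "t > 0"
  shows "bessel_I nu (2 * t) = t powr nu * (\<Sum>k. bessel_coeff nu k * (t\<^sup>2) ^ k)"
proof -
  have termwise: "(2 * t / 2) powr (2 * real k + nu) / (fact k * Gamma (real k + nu + 1))
      = t powr nu * (bessel_coeff nu k * (t\<^sup>2) ^ k)" for k
  proof -
    have "t powr (real (2 * k)) = (t\<^sup>2) ^ k"
      using t by (simp only: powr_realpow power_mult)
    then have "t powr (2 * real k + nu) = t powr nu * (t\<^sup>2) ^ k"
      by (simp add: powr_add)
    then show ?thesis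
      by (simp add: bessel_coeff_def)
  qed
  have "bessel_I nu (2 * t) = (\<Sum>k. t powr nu * (bessel_coeff nu k * (t\<^sup>2) ^ k))"
    unfolding bessel_I_def termwise ..
  also have "\<dots> = t powr nu * (\<Sum>k. bessel_coeff nu k * (t\<^sup>2) ^ k)"
    using summable_norm_cancel[OF summable_norm_bessel_coeff[OF nu]] by (rule suminf_mult)
  finally show ?thesis .
qed

lemma Cauchy_product_power_series_sums:
  fixes a b :: "nat \<Rightarrow> 'a::{real_normed_field,banach}"
  assumes "summable (\<lambda>k. norm (a k * z ^ k))" and "summable (\<lambda>k. norm (b k * z ^ k))"
  shows "(\<lambda>k. z ^ k * (\<Sum>i\<le>k. a i * b (k - i))) sums ((\<Sum>k. a k * z ^ k) * (\<Sum>k. b k * z ^ k))"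
proof -
  have "(\<Sum>i\<le>k. (a i * z ^ i) * (b (k - i) * z ^ (k - i))) = z ^ k * (\<Sum>i\<le>k. a i * b (k - i))" for k
    unfolding sum_distrib_left
  proof (intro sum.cong refl)
    fix i assume "i \<in> {..k}"
    then have "z ^ k = z ^ i * z ^ (k - i)"
      by (simp add: power_add[symmetric])
    then show "(a i * z ^ i) * (b (k - i) * z ^ (k - i)) = z ^ k * (a i * b (k - i))"
      by (simp only: ac_simps)
  qed
  with Cauchy_product_sums[OF assms] show ?thesis
    by simp
qed

lemma bessel_coeff_series_ineq:
  fixes nu s :: real
  assumes nu: "nu \<ge> 0" and s: "s > 0"
  defines "A \<equiv> \<Sum>k. bessel_coeff nu k * s ^ k"
    and "B \<equiv> \<Sum>k. bessel_coeff (nu + 1) k * s ^ k"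
  shows "s * B\<^sup>2 < A * (A - B / 2)"
proof -
  define a where "a = bessel_coeff nu"
  define b where "b = bessel_coeff (nu + 1)"
  define c where "c = (\<lambda>k. a k - b k / 2)"
  have sa: "summable (\<lambda>k. norm (a k * s ^ k))" and sb: "summable (\<lambda>k. norm (b k * s ^ k))"
    unfolding a_def b_def using nu by (simp_all only: summable_norm_bessel_coeff)
  have sc: "summable (\<lambda>k. norm (c k * s ^ k))"
  proof (rule summable_comparison_test'[where N=0])
    show "summable (\<lambda>k. norm (a k * s ^ k) + norm (b k * s ^ k) / 2)"
      using sa sb by (intro summable_add summable_divide)
    show "norm (norm (c k * s ^ k)) \<le> norm (a k * s ^ k) + norm (b k * s ^ k) / 2" for k
      using abs_triangle_ineq4[of "a k * s ^ k" "b k * s ^ k / 2"]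
      by (simp add: c_def abs_mult left_diff_distrib)
  qed
  have "(\<Sum>k. c k * s ^ k) = (\<Sum>k. a k * s ^ k - b k * s ^ k / 2)"
    by (simp add: c_def left_diff_distrib)
  also have "\<dots> = A - B / 2"
    using suminf_diff[OF summable_norm_cancel[OF sa] summable_divide[OF summable_norm_cancel[OF sb]]]
      suminf_divide[OF summable_norm_cancel[OF sb]]
    by (simp add: A_def B_def a_def b_def)
  finally have C: "(\<Sum>k. c k * s ^ k) = A - B / 2" .
  define p where "p = (\<lambda>k. \<Sum>i\<le>k. a i * c (k - i))"
  define q where "q = (\<lambda>k. \<Sum>i\<le>k. b i * b (k - i))"
  have "(\<lambda>k. s ^ k * p k) sums (A * (A - B / 2))"
    using Cauchy_product_power_series_sums[OF sa sc] by (simp add: C p_def A_def a_def)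
  then have p_sums: "(\<lambda>k. s ^ Suc k * p (Suc k)) sums (A * (A - B / 2) - p 0)"
    using sums_Suc_iff[of "\<lambda>k. s ^ k * p k" "A * (A - B / 2) - p 0"] by simp
  have q_sums: "(\<lambda>k. s ^ Suc k * q k) sums (s * B\<^sup>2)"
    using sums_mult[OF Cauchy_product_power_series_sums[OF sb sb], of s]
    by (simp add: q_def B_def b_def power2_eq_square mult.assoc)
  have "q k \<le> p (Suc k)" for k
    using bessel_coeff_convolution_le[OF nu, of k] by (simp add: p_def q_def a_def b_def c_def)
  then have "s * B\<^sup>2 \<le> A * (A - B / 2) - p 0"
    using s by (intro sums_le[OF _ q_sums p_sums] mult_left_mono) auto
  moreover have "p 0 > 0"
  proof -
    have "a 0 = (nu + 1) * b 0"
      using bessel_coeff_order_Suc[of nu 0] nu by (simp add: a_def b_def)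
    moreover have "b 0 > 0"
      unfolding b_def using nu by (intro bessel_coeff_pos) simp
    ultimately show ?thesis
      using nu by (simp add: p_def c_def)
  qed
  ultimately show ?thesis
    by simp
qed

text \<open>The hypothesis \<open>K > \<nu> + 1\<close> only guarantees that a solution \<open>r\<close> exists;
  the bound itself needs just \<open>K > 0\<close>.\<close>

theorem mainTheorem4:
  fixes nu K r :: real
  assumes "nu \<ge> 0" and "K > nu + 1" and "r > 0" and "r = Psi nu (2 * K * r)"
  shows "r < sqrt (1 - 1 / (2 * K))"
proof -
  define t where "t = K * r"
  define A where "A = (\<Sum>k. bessel_coeff nu k * (t\<^sup>2) ^ k)"
  define B where "B = (\<Sum>k. bessel_coeff (nu + 1) k * (t\<^sup>2) ^ k)"
  have K: "K > 0" and t: "t > 0"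
    using assms by (auto simp: t_def)
  have A_pos: "A > 0"
    unfolding A_def using assms(1)
    by (intro suminf_pos summable_norm_cancel[OF summable_norm_bessel_coeff] mult_pos_pos
        bessel_coeff_pos zero_less_power) (auto simp: t)
  have "bessel_I nu (2 * t) = t powr nu * A"
    and "bessel_I (nu + 1) (2 * t) = t powr nu * t * B"
    using bessel_I_power_series[of nu t] bessel_I_power_series[of "nu + 1" t] assms(1) t
    by (simp_all add: A_def B_def powr_add)
  moreover have "r = bessel_I (nu + 1) (2 * t) / bessel_I nu (2 * t)"
    using assms(4) by (simp add: Psi_def t_def mult.assoc)
  ultimately have rA: "r * A = t * B"
    using A_pos t by (simp add: field_simps)
  have "t\<^sup>2 * B\<^sup>2 < A * (A - B / 2)"
    unfolding A_def B_def using assms(1) t by (intro bessel_coeff_series_ineq) auto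
  also have "t\<^sup>2 * B\<^sup>2 = A\<^sup>2 * r\<^sup>2"
    using rA by (metis power_mult_distrib mult.commute)
  also have "A * (A - B / 2) = A\<^sup>2 * (1 - 1 / (2 * K))"
    using rA K assms(3) unfolding t_def by (simp add: field_simps power2_eq_square)
  finally have "r\<^sup>2 < 1 - 1 / (2 * K)"
    using A_pos by simp
  then show ?thesis
    by (rule real_less_rsqrt)
qed

end
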